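(* Let $E=\mathbb{R}^n$, $d\ge1$ an integer, $m\in(0,1)$, $a>0$. Let $\mu,\nu$ be probability measures on $E$ with $\operatorname{supp}\mu$ bounded and $w:=W_2(\mu,\nu)\le \frac14$. Suppose that for every $x\in\operatorname{supp}\mu$ and every $r<(m/a)^{1/d}$, $\mu(B(x,r))\ge a r^d$ ($B$ the open ball). Then $$d_i\big(W[\mu],W[\nu]\big)\le \big(8\,\mathrm{diam}(\operatorname{supp}\mu)+5\big)\Big(\frac{w}{m}\Big)^{1/2}+2a^{-1/d}m^{1/d}.$$
   Context: $W_2$ is the 2-Wasserstein distance on probability measures on $E$. For a probability measure $\alpha$ on $E$, $t\in[0,1)$, $x\in E$: $\delta_{\alpha,t}(x)=\inf\{r\ge0:\alpha(\bar B(x,r))>t\}$ ($\bar B$ closed ball) and the DTM is $d_{\alpha,m}(x)=\big(\frac1m\int_0^m\delta_{\alpha,t}^2(x)dt\big)^{1/2}$. The DTM-filtration $W[\alpha]=(W[\alpha]^t)_{t\ge0}$ is $W[\alpha]^t=\bigcup_{x\in\operatorname{supp}\alpha}\bar B\big(x,t-d_{\alpha,m}(x)\big)$, where $\bar B(x,s)$ is taken to be empty when $s<0$. Two filtrations $V,W$ of $E$ are $\epsilon$-interleaved if $V^t\subseteq W^{t+\epsilon}$ and $W^t\subseteq V^{t+\epsilon}$ for all $t\ge0$; $d_i(V,W)$ is the infimum of such $\epsilon$. *)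

theory Defs
  imports "HOL-Probability.Probability"
begin

definition is_prob_on :: "'a::euclidean_space measure \<Rightarrow> bool" where
  "is_prob_on M \<longleftrightarrow> prob_space M \<and> sets M = sets borel"

definition supp :: "'a::euclidean_space measure \<Rightarrow> 'a set" where
  "supp M = {x. \<forall>r>0. measure M (ball x r) > 0}"

definition couplings :: "'a::euclidean_space measure \<Rightarrow> 'a measure \<Rightarrow> ('a \<times> 'a) measure set" where
  "couplings \<mu> \<nu> = {\<pi>. prob_space \<pi> \<and> sets \<pi> = sets borel \<and>
      distr \<pi> borel fst = \<mu> \<and> distr \<pi> borel snd = \<nu>}"

definition W2_sq :: "'a::euclidean_space measure \<Rightarrow> 'a measure \<Rightarrow> ennreal" where
  "W2_sq \<mu> \<nu> = (INF \<pi>\<in>couplings \<mu> \<nu>. \<integral>\<^sup>+ p. ennreal ((dist (fst p) (snd p))\<^sup>2) \<partial>\<pi>)"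

definition W2 :: "'a::euclidean_space measure \<Rightarrow> 'a measure \<Rightarrow> real" where
  "W2 \<mu> \<nu> = sqrt (enn2real (W2_sq \<mu> \<nu>))"

definition delta_fun :: "'a::euclidean_space measure \<Rightarrow> real \<Rightarrow> 'a \<Rightarrow> real" where
  "delta_fun \<alpha> t x = Inf {r. r \<ge> 0 \<and> measure \<alpha> (cball x r) > t}"

definition dtm :: "'a::euclidean_space measure \<Rightarrow> real \<Rightarrow> 'a \<Rightarrow> real" where
  "dtm \<alpha> m x = sqrt ((1 / m) * integral {0..m} (\<lambda>t. (delta_fun \<alpha> t x)\<^sup>2))"

text \<open>DTM-filtration; cball x s is empty for s < 0.\<close>
definition dtm_filtration :: "'a::euclidean_space measure \<Rightarrow> real \<Rightarrow> real \<Rightarrow> 'a set" where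
  "dtm_filtration \<alpha> m t = (\<Union>x\<in>supp \<alpha>. cball x (t - dtm \<alpha> m x))"

definition interleaved :: "real \<Rightarrow> (real \<Rightarrow> 'a set) \<Rightarrow> (real \<Rightarrow> 'a set) \<Rightarrow> bool" where
  "interleaved \<epsilon> V W \<longleftrightarrow> (\<forall>t\<ge>0. V t \<subseteq> W (t + \<epsilon>) \<and> W t \<subseteq> V (t + \<epsilon>))"

text \<open>Interleaving distance (infimum in the extended reals; +\<infinity> if never interleaved).\<close>
definition interleaving_dist :: "(real \<Rightarrow> 'a set) \<Rightarrow> (real \<Rightarrow> 'a set) \<Rightarrow> ereal" where
  "interleaving_dist V W = Inf {ereal \<epsilon> | \<epsilon>. \<epsilon> \<ge> 0 \<and> interleaved \<epsilon> V W}"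

end

(*
  The distance to a measure is a weighted L^2 distance.  With F(r) = alpha (cball x r), the
  layer-cake formula rewrites the defining integral as
    m * dtm^2 = integral over [0,m] of delta_t^2 = integral over [0,oo) of 2r * max 0 (m - F r),
  and by the bathtub principle this is the minimum of the integral of h(p) * |x - p|^2 d alpha(p)
  over all densities 0 <= h <= 1 of total mass m, attained by filling the ball around x up to
  mass m.  Minkowski's inequality in L^2(h alpha) then shows that dtm alpha m is 1-Lipschitz and,
  applied on a coupling of mu and nu, that |dtm mu m - dtm nu m| <= W2 mu nu / sqrt m.  The growth
  condition bounds dtm mu m by c = (m/a)^(1/d) on supp mu.  As every point x has a support point
  within distance dtm alpha m x, the two DTM-filtrations are (2c + 3 W2/sqrt m)-interleaved, which
  is below the claimed bound because W2 <= 1.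
*)

theory Submission
  imports Defs
begin

section \<open>Quantile functions and the layer-cake formula\<close>

definition quantile :: "(real \<Rightarrow> real) \<Rightarrow> real \<Rightarrow> real" where
  "quantile F t = Inf {r. 0 \<le> r \<and> t < F r}"

definition quantile_energy :: "(real \<Rightarrow> real) \<Rightarrow> real \<Rightarrow> real" where
  "quantile_energy F m = integral {0..m} (\<lambda>t. (quantile F t)\<^sup>2)"

lemma quantile_energy_nonneg: "0 \<le> quantile_energy F m"
  unfolding quantile_energy_def
  by (cases "(\<lambda>t. (quantile F t)\<^sup>2) integrable_on {0..m}")
    (simp_all add: integral_nonneg not_integrable_integral)

lemma dtm_eq_quantile_energy:
  "dtm \<alpha> m x = sqrt (quantile_energy (\<lambda>r. measure \<alpha> (cball x r)) m / m)"
  by (simp add: dtm_def quantile_energy_def quantile_def delta_fun_def)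

lemma nn_integral_2r_below_eq_square:
  assumes "0 \<le> (q::real)"
  shows "(\<integral>\<^sup>+ r. ennreal (indicator {0..} r * (2 * r)) * indicator {..<q} r \<partial>lborel) = ennreal (q\<^sup>2)"
proof -
  have "(\<integral>\<^sup>+ r. ennreal (indicator {0..} r * (2 * r)) * indicator {..<q} r \<partial>lborel)
      = (\<integral>\<^sup>+ r. ennreal (indicator {0..q} r * (2 * r)) \<partial>lborel)"
    by (rule nn_integral_cong_AE)
      (use AE_lborel_singleton[of q] in \<open>auto simp: indicator_def\<close>)
  also have "\<dots> = ennreal (q\<^sup>2)"
  proof (rule nn_integral_has_integral_lebesgue)
    have "((\<lambda>r. r\<^sup>2) has_real_derivative 2 * r) (at r within {0..q})" for r
      by (auto intro!: derivative_eq_intros)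
    then show "((\<lambda>r. 2 * r) has_integral q\<^sup>2) {0..q}"
      using fundamental_theorem_of_calculus[of 0 q "\<lambda>r. r\<^sup>2" "\<lambda>r. 2 * r"] assms
      by (simp add: has_real_derivative_iff_has_vector_derivative[symmetric])
  qed auto
  finally show ?thesis .
qed

lemma (in sigma_finite_measure) nn_integral_mult_square_layer_cake:
  assumes [measurable]: "g \<in> borel_measurable M" "f \<in> borel_measurable M"
    and f_nonneg: "\<And>p. 0 \<le> f p"
  shows "(\<integral>\<^sup>+ p. g p * ennreal ((f p)\<^sup>2) \<partial>M)
    = (\<integral>\<^sup>+ r. ennreal (indicator {0..} r * (2 * r))
              * (\<integral>\<^sup>+ p. g p * indicator {p. r < f p} p \<partial>M) \<partial>lborel)"
proof -
  interpret pair_sigma_finite M lborel ..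
  have "(\<integral>\<^sup>+ p. g p * ennreal ((f p)\<^sup>2) \<partial>M)
      = (\<integral>\<^sup>+ p. (\<integral>\<^sup>+ r. g p * (ennreal (indicator {0..} r * (2 * r)) * indicator {..<f p} r)
              \<partial>lborel) \<partial>M)"
    by (simp add: nn_integral_cmult nn_integral_2r_below_eq_square f_nonneg)
  also have "\<dots> = (\<integral>\<^sup>+ r. (\<integral>\<^sup>+ p. ennreal (indicator {0..} r * (2 * r)) * (g p * indicator {p. r < f p} p)
              \<partial>M) \<partial>lborel)"
    by (subst Fubini') (auto simp: indicator_def mult_ac intro!: nn_integral_cong)
  also have "\<dots> = (\<integral>\<^sup>+ r. ennreal (indicator {0..} r * (2 * r))
              * (\<integral>\<^sup>+ p. g p * indicator {p. r < f p} p \<partial>M) \<partial>lborel)"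
    by (simp add: nn_integral_cmult)
  finally show ?thesis .
qed

locale quantile_profile =
  fixes F :: "real \<Rightarrow> real" and m :: real
  assumes mono_F: "mono F"
    and F_nonneg: "\<And>r. 0 \<le> F r"
    and F_right_cont: "\<And>r. continuous (at_right r) F"
    and m_pos: "0 < m"
    and F_exceeds_m: "\<exists>r\<ge>0. m < F r"
begin

lemma quantile_set_nonempty: "t \<le> m \<Longrightarrow> {r. 0 \<le> r \<and> t < F r} \<noteq> {}"
  using F_exceeds_m by force

lemma quantile_set_bdd_below: "bdd_below {r. 0 \<le> r \<and> t < F r}"
  by (rule bdd_belowI[of _ 0]) auto

lemma quantile_le: "0 \<le> r \<Longrightarrow> t < F r \<Longrightarrow> quantile F t \<le> r"
  unfolding quantile_def by (rule cInf_lower[OF _ quantile_set_bdd_below]) auto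

lemma le_quantile: "t \<le> m \<Longrightarrow> (\<And>r. 0 \<le> r \<Longrightarrow> t < F r \<Longrightarrow> c \<le> r) \<Longrightarrow> c \<le> quantile F t"
  unfolding quantile_def by (rule cInf_greatest[OF quantile_set_nonempty]) auto

lemma quantile_nonneg: "t \<le> m \<Longrightarrow> 0 \<le> quantile F t"
  by (rule le_quantile) auto

lemma quantile_mono: "t \<le> t' \<Longrightarrow> t' \<le> m \<Longrightarrow> quantile F t \<le> quantile F t'"
  unfolding quantile_def
  by (rule cInf_superset_mono[OF quantile_set_nonempty quantile_set_bdd_below]) auto

lemma quantile_bounded: obtains B where "\<And>t. t \<le> m \<Longrightarrow> quantile F t \<le> B"
proof -
  obtain r where "0 \<le> r" "m < F r"
    using F_exceeds_m by blast
  then show ?thesis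
    using quantile_le that by (meson order.strict_trans1)
qed

lemma F_le_below_quantile: "0 \<le> r \<Longrightarrow> r < quantile F t \<Longrightarrow> F r \<le> t"
  using quantile_le by (meson not_less)

lemma less_quantile:
  assumes "0 \<le> r" "F r < t" "t \<le> m"
  shows "r < quantile F t"
proof -
  have "(F \<longlongrightarrow> F r) (at_right r)"
    using F_right_cont[of r] by (simp add: continuous_within)
  then have "\<forall>\<^sub>F s in at_right r. F s < t"
    using \<open>F r < t\<close> by (rule order_tendstoD)
  then obtain b where "r < b" and b: "\<And>s. r < s \<Longrightarrow> s < b \<Longrightarrow> F s < t"
    unfolding eventually_at_right_field by blast
  obtain s where "r < s" "s < b"
    using dense[OF \<open>r < b\<close>] by blast
  have "s \<le> quantile F t"
  proof (rule le_quantile[OF \<open>t \<le> m\<close>])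
    fix r' assume "t < F r'"
    show "s \<le> r'"
    proof (rule ccontr)
      assume "\<not> s \<le> r'"
      then have "F r' \<le> F s"
        using mono_F by (simp add: monoD)
      then show False
        using b[OF \<open>r < s\<close> \<open>s < b\<close>] \<open>t < F r'\<close> by simp
    qed
  qed
  then show ?thesis
    using \<open>r < s\<close> by linarith
qed

lemma le_F_quantile: "t \<le> m \<Longrightarrow> t \<le> F (quantile F t)"
  using less_quantile[OF quantile_nonneg] by (meson less_irrefl not_le)

text \<open>Beyond the range of \<open>F\<close> the quantile is the junk value \<open>Inf {}\<close>; freezing it at \<open>m\<close>
  gives a monotone, hence Borel, function on all of \<open>\<real>\<close>.\<close>
definition quantile_upto :: "real \<Rightarrow> real" where
  "quantile_upto t = quantile F (min t m)"

lemma borel_measurable_quantile_upto [measurable]: "quantile_upto \<in> borel_measurable borel"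
  by (rule borel_measurable_mono) (auto simp: mono_def quantile_upto_def intro!: quantile_mono)

lemma emeasure_quantile_upto_greater:
  assumes "0 \<le> r"
  shows "emeasure lborel ({0..m} \<inter> {t. r < quantile_upto t}) = ennreal (m - F r)"
proof -
  let ?S = "{0..m} \<inter> {t. r < quantile_upto t}"
  have "{F r<..m} \<subseteq> ?S"
    using less_quantile[OF assms] F_nonneg[of r] by (auto simp: quantile_upto_def)
  moreover have "?S \<subseteq> {F r..m}"
    using F_le_below_quantile[OF assms] by (auto simp: quantile_upto_def)
  ultimately have "emeasure lborel {F r<..m} \<le> emeasure lborel ?S"
    and "emeasure lborel ?S \<le> emeasure lborel {F r..m}"
    by (auto intro!: emeasure_mono)
  then show ?thesis
    by (cases "F r \<le> m") (auto simp: ennreal_eq_0_iff)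
qed

lemma quantile_upto_nonneg: "0 \<le> quantile_upto t"
  by (simp add: quantile_upto_def quantile_nonneg)

lemma nn_integral_quantile_upto_sq:
  "(\<integral>\<^sup>+ t. ennreal (indicator {0..m} t * (quantile_upto t)\<^sup>2) \<partial>lborel)
    = (\<integral>\<^sup>+ r. ennreal (indicator {0..} r * (2 * r)) * ennreal (m - F r) \<partial>lborel)"
proof -
  have "(\<integral>\<^sup>+ t. ennreal (indicator {0..m} t * (quantile_upto t)\<^sup>2) \<partial>lborel)
      = (\<integral>\<^sup>+ t. indicator {0..m} t * ennreal ((quantile_upto t)\<^sup>2) \<partial>lborel)"
    by (intro nn_integral_cong) (simp add: indicator_def)
  also have "\<dots> = (\<integral>\<^sup>+ r. ennreal (indicator {0..} r * (2 * r))
      * (\<integral>\<^sup>+ t. indicator ({0..m} \<inter> {t. r < quantile_upto t}) t \<partial>lborel) \<partial>lborel)"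
    by (simp add: lborel.nn_integral_mult_square_layer_cake quantile_upto_nonneg indicator_inter_arith)
  also have "\<dots> = (\<integral>\<^sup>+ r. ennreal (indicator {0..} r * (2 * r)) * ennreal (m - F r) \<partial>lborel)"
  proof (intro nn_integral_cong)
    fix r :: real
    show "ennreal (indicator {0..} r * (2 * r))
        * (\<integral>\<^sup>+ t. indicator ({0..m} \<inter> {t. r < quantile_upto t}) t \<partial>lborel)
      = ennreal (indicator {0..} r * (2 * r)) * ennreal (m - F r)"
      by (cases "0 \<le> r") (simp_all add: emeasure_quantile_upto_greater)
  qed
  finally show ?thesis .
qed

lemma quantile_energy_layer_cake:
  shows "(\<lambda>t. (quantile F t)\<^sup>2) integrable_on {0..m}"
    and "ennreal (quantile_energy F m)
      = (\<integral>\<^sup>+ r. ennreal (indicator {0..} r * (2 * r)) * ennreal (m - F r) \<partial>lborel)"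
proof -
  define g where "g t = indicator {0..m} t * (quantile_upto t)\<^sup>2" for t
  obtain B where B: "\<And>t. t \<le> m \<Longrightarrow> quantile F t \<le> B"
    using quantile_bounded by blast
  have "(\<integral>\<^sup>+ t. ennreal (g t) \<partial>lborel) \<le> (\<integral>\<^sup>+ t. ennreal (B\<^sup>2) * indicator {0..m} t \<partial>lborel)"
    using B quantile_upto_nonneg
    by (intro nn_integral_mono) (auto simp: g_def quantile_upto_def indicator_def intro!: power_mono quantile_nonneg)
  also have "\<dots> < \<infinity>"
    using m_pos by (simp add: nn_integral_cmult_indicator ennreal_mult_less_top)
  finally have finite: "(\<integral>\<^sup>+ t. ennreal (g t) \<partial>lborel) < \<infinity>" .
  have "(g has_integral enn2real (\<integral>\<^sup>+ t. ennreal (g t) \<partial>lborel)) UNIV"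
    using finite unfolding g_def by (intro nn_integral_has_integral) simp_all
  moreover have "g = (\<lambda>t. if t \<in> {0..m} then (quantile_upto t)\<^sup>2 else 0)"
    by (auto simp: g_def)
  ultimately have "((\<lambda>t. (quantile_upto t)\<^sup>2) has_integral enn2real (\<integral>\<^sup>+ t. ennreal (g t) \<partial>lborel)) {0..m}"
    by (simp only: has_integral_restrict_UNIV)
  then have "((\<lambda>t. (quantile F t)\<^sup>2) has_integral enn2real (\<integral>\<^sup>+ t. ennreal (g t) \<partial>lborel)) {0..m}"
    by (rule has_integral_cong[THEN iffD1, rotated]) (simp add: quantile_upto_def)
  then show "(\<lambda>t. (quantile F t)\<^sup>2) integrable_on {0..m}"
    and "ennreal (quantile_energy F m)
      = (\<integral>\<^sup>+ r. ennreal (indicator {0..} r * (2 * r)) * ennreal (m - F r) \<partial>lborel)"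
    using finite unfolding quantile_energy_def g_def nn_integral_quantile_upto_sq[symmetric]
    by (simp_all add: integral_unique has_integral_integrable)
qed

lemma quantile_energy_ge:
  assumes "0 \<le> c" and "\<And>t. 0 \<le> t \<Longrightarrow> t \<le> m \<Longrightarrow> c \<le> quantile F t"
  shows "m * c\<^sup>2 \<le> quantile_energy F m"
proof -
  have "integral {0..m} (\<lambda>t. c\<^sup>2) \<le> quantile_energy F m"
    unfolding quantile_energy_def using assms quantile_energy_layer_cake(1)
    by (intro integral_le) (auto intro!: power_mono)
  then show ?thesis
    using m_pos by simp
qed

lemma quantile_energy_le:
  assumes "\<And>t. 0 \<le> t \<Longrightarrow> t < m \<Longrightarrow> quantile F t \<le> c"
  shows "quantile_energy F m \<le> m * c\<^sup>2"
proof -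
  let ?f = "\<lambda>t. if t = m then 0 else (quantile F t)\<^sup>2"
  have "quantile_energy F m = integral {0..m} ?f"
    unfolding quantile_energy_def by (rule integral_spike[of "{m}"]) auto
  also have "\<dots> \<le> integral {0..m} (\<lambda>t. c\<^sup>2)"
  proof (rule integral_le)
    show "?f integrable_on {0..m}"
      by (rule integrable_spike_finite[where S = "{m}" and f = "\<lambda>t. (quantile F t)\<^sup>2"])
        (use quantile_energy_layer_cake(1) in auto)
    show "?f t \<le> c\<^sup>2" if "t \<in> {0..m}" for t
      using that assms[of t] quantile_nonneg[of t] by (auto intro!: power_mono)
  qed (rule integrable_const_ivl)
  also have "\<dots> = m * c\<^sup>2"
    using m_pos by simp
  finally show ?thesis .
qed


end

section \<open>Energies of random variables as minima over submeasures\<close>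

lemma (in real_distribution) quantile_profile_cdf:
  assumes "0 < m" "m < 1"
  shows "quantile_profile (cdf M) m"
proof
  show "mono (cdf M)"
    by (simp add: cdf_nondecreasing monoI)
  show "0 \<le> cdf M r" "continuous (at_right r) (cdf M)" for r
    by (simp_all add: cdf_nonneg cdf_is_right_cont)
  have "\<forall>\<^sub>F r in at_top. m < cdf M r"
    using cdf_lim_at_top_prob \<open>m < 1\<close> by (rule order_tendstoD)
  then obtain N where "\<And>r. N \<le> r \<Longrightarrow> m < cdf M r"
    by (auto simp: eventually_at_top_linorder)
  then show "\<exists>r\<ge>0. m < cdf M r"
    by (meson max.cobounded1 max.cobounded2)
qed (fact \<open>0 < m\<close>)

lemma (in real_distribution) measure_lessThan_quantile_cdf_le:
  assumes "0 < m" "m < 1" and "measure M {..<0} = 0"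
  shows "measure M {..< quantile (cdf M) m} \<le> m"
proof -
  interpret quantile_profile "cdf M" m
    using quantile_profile_cdf assms(1,2) .
  let ?q = "quantile (cdf M) m"
  have "cdf M r \<le> m" if "r < ?q" for r
  proof (cases "0 \<le> r")
    case True
    then show ?thesis
      using F_le_below_quantile that by blast
  next
    case False
    then have "cdf M r \<le> measure M {..<0}"
      unfolding cdf_def by (intro finite_measure_mono) auto
    then show ?thesis
      using assms(1,3) by simp
  qed
  then have "\<forall>\<^sub>F r in at_left ?q. cdf M r \<le> m"
    by (intro eventually_at_leftI[of "?q - 1"]) auto
  with cdf_at_left show ?thesis
    by (rule tendsto_upperbound) simp
qed

lemma (in prob_space) cdf_distr:
  assumes "R \<in> borel_measurable M"
  shows "cdf (distr M borel R) r = measure M {p \<in> space M. R p \<le> r}"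
  using assms by (simp add: cdf_def measure_distr vimage_def Int_def conj_commute)

definition submeasure_density :: "'a measure \<Rightarrow> real \<Rightarrow> ('a \<Rightarrow> real) \<Rightarrow> bool" where
  "submeasure_density M m h \<longleftrightarrow>
     h \<in> borel_measurable M \<and> (\<forall>p. 0 \<le> h p \<and> h p \<le> 1) \<and> (\<integral>p. h p \<partial>M) = m"

lemma integrable_submeasure_density_mult:
  assumes "submeasure_density M m h" and "f \<in> borel_measurable M" and "integrable M f"
  shows "integrable M (\<lambda>p. h p * f p)"
  using assms unfolding submeasure_density_def
  by (intro Bochner_Integration.integrable_bound[OF \<open>integrable M f\<close>])
    (auto simp: abs_mult mult_left_le_one_le)

lemma (in finite_measure) integral_submeasure_density_mult_indicator:
  assumes "submeasure_density M m h" and [measurable]: "A \<in> sets M"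
  shows "integrable M (\<lambda>p. h p * indicator A p)"
    and "(\<integral>\<^sup>+ p. ennreal (h p) * indicator A p \<partial>M) = ennreal (\<integral>p. h p * indicator A p \<partial>M)"
proof -
  have [measurable]: "h \<in> borel_measurable M" and h: "\<And>p. 0 \<le> h p"
    using assms(1) by (auto simp: submeasure_density_def)
  show int: "integrable M (\<lambda>p. h p * indicator A p)"
    using assms by (intro integrable_submeasure_density_mult) (auto simp: less_top[symmetric])
  have "(\<integral>\<^sup>+ p. ennreal (h p) * indicator A p \<partial>M) = (\<integral>\<^sup>+ p. ennreal (h p * indicator A p) \<partial>M)"
    by (intro nn_integral_cong) (simp add: indicator_def)
  also have "\<dots> = ennreal (\<integral>p. h p * indicator A p \<partial>M)"
    using int h by (intro nn_integral_eq_integral) auto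
  finally show "(\<integral>\<^sup>+ p. ennreal (h p) * indicator A p \<partial>M) = ennreal (\<integral>p. h p * indicator A p \<partial>M)" .
qed

text \<open>Bathtub principle: at most \<open>F(r) = M{S \<le> r}\<close> of the mass \<open>m\<close> of \<open>h M\<close> fits below
  level \<open>r\<close>, because \<open>h \<le> 1\<close>.\<close>
lemma (in prob_space) integral_submeasure_density_above_ge:
  assumes h: "submeasure_density M m h" and [measurable]: "S \<in> borel_measurable M"
  shows "m - cdf (distr M borel S) r \<le> (\<integral>p. h p * indicator {p \<in> space M. r < S p} p \<partial>M)"
proof -
  have [measurable]: "h \<in> borel_measurable M" and h01: "\<And>p. 0 \<le> h p \<and> h p \<le> 1"
    and "(\<integral>p. h p \<partial>M) = m"
    using h by (auto simp: submeasure_density_def)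
  let ?above = "{p \<in> space M. r < S p}" and ?below = "{p \<in> space M. S p \<le> r}"
  have "m = (\<integral>p. h p * indicator ?above p + h p * indicator ?below p \<partial>M)"
    unfolding \<open>(\<integral>p. h p \<partial>M) = m\<close>[symmetric]
    by (intro Bochner_Integration.integral_cong) (auto simp: indicator_def)
  also have "\<dots> = (\<integral>p. h p * indicator ?above p \<partial>M) + (\<integral>p. h p * indicator ?below p \<partial>M)"
    using integral_submeasure_density_mult_indicator(1)[OF h] by (intro Bochner_Integration.integral_add) auto
  also have "(\<integral>p. h p * indicator ?below p \<partial>M) \<le> (\<integral>p. indicator ?below p \<partial>M)"
  proof (rule integral_mono)
    show "integrable M (\<lambda>p. h p * indicator ?below p)"
      by (rule integral_submeasure_density_mult_indicator(1)[OF h]) measurable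
    show "integrable M (indicator ?below :: _ \<Rightarrow> real)"
      by (intro integrable_real_indicator) (auto simp: less_top[symmetric])
    show "h p * indicator ?below p \<le> indicator ?below p" for p
      using h01[of p] by (simp add: indicator_def)
  qed
  also have "(\<integral>p. indicator ?below p \<partial>M) = cdf (distr M borel S) r"
    by (simp add: cdf_distr)
  finally show ?thesis
    by simp
qed

lemma (in finite_measure) integral_indicator_add_scaled:
  assumes "A \<in> sets M" "B \<in> sets M"
  shows "(\<integral>p. indicator A p + c * indicator B p \<partial>M) = measure M A + c * measure M B"
  using assms by (subst Bochner_Integration.integral_add) (auto simp: less_top[symmetric])

lemma (in prob_space) quantile_cdf_distr_atom_split:
  assumes [measurable]: "R \<in> borel_measurable M" and R_nonneg: "\<And>p. 0 \<le> R p"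
    and "0 < m" "m < 1"
  defines "q \<equiv> quantile (cdf (distr M borel R)) m"
  obtains \<theta> where "0 \<le> \<theta>" "\<theta> \<le> 1"
    and "measure M {p \<in> space M. R p < q} + \<theta> * measure M {p \<in> space M. R p = q} = m"
proof -
  let ?N = "distr M borel R" and ?A = "{p \<in> space M. R p < q}" and ?B = "{p \<in> space M. R p = q}"
  interpret N: real_distribution ?N
    by simp
  interpret quantile_profile "cdf ?N" m
    using N.quantile_profile_cdf assms(3,4) .
  have "R -` {..<0} \<inter> space M = {}"
    using R_nonneg[THEN leD] by auto
  then have "measure ?N {..<0} = 0"
    by (simp add: measure_distr)
  then have "measure ?N {..<q} \<le> m"
    unfolding q_def using N.measure_lessThan_quantile_cdf_le assms(3,4) by blast
  then have A_le: "measure M ?A \<le> m"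
    by (simp add: measure_distr vimage_def Int_def conj_commute)
  have "m \<le> cdf ?N q"
    unfolding q_def using le_F_quantile by simp
  also have "cdf ?N q = measure M (?A \<union> ?B)"
    unfolding cdf_distr[OF \<open>R \<in> borel_measurable M\<close>] by (intro arg_cong[where f = "measure M"]) auto
  also have "\<dots> = measure M ?A + measure M ?B"
    by (rule finite_measure_Union) auto
  finally have "m \<le> measure M ?A + measure M ?B" .
  with A_le show ?thesis
    by (intro that[of "if measure M ?B = 0 then 0 else (m - measure M ?A) / measure M ?B"])
      (auto simp: field_simps)
qed

text \<open>The optimal density is \<open>1\<close> strictly below the \<open>m\<close>-quantile \<open>q\<close> of \<open>R\<close>, \<open>0\<close> above it,
  and the constant that makes up the missing mass on the atom \<open>{R = q}\<close>.\<close>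
lemma (in prob_space) exists_optimal_submeasure_density:
  assumes [measurable]: "R \<in> borel_measurable M" and R_nonneg: "\<And>p. 0 \<le> R p"
    and "0 < m" "m < 1"
  obtains h where "submeasure_density M m h"
    and "\<And>r. 0 \<le> r \<Longrightarrow> (\<integral>p. h p * indicator {p \<in> space M. r < R p} p \<partial>M)
                          = max 0 (m - cdf (distr M borel R) r)"
proof -
  let ?N = "distr M borel R"
  interpret N: real_distribution ?N
    by simp
  interpret quantile_profile "cdf ?N" m
    using N.quantile_profile_cdf assms(3,4) .
  define q where "q = quantile (cdf ?N) m"
  define A where "A = {p \<in> space M. R p < q}"
  define B where "B = {p \<in> space M. R p = q}"
  obtain \<theta> where \<theta>: "0 \<le> \<theta>" "\<theta> \<le> 1" "measure M A + \<theta> * measure M B = m"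
    using quantile_cdf_distr_atom_split assms unfolding A_def B_def q_def by blast
  define h where "h = (\<lambda>p. indicator A p + \<theta> * indicator B p)"
  have [measurable]: "A \<in> sets M" "B \<in> sets M"
    unfolding A_def B_def by measurable
  have "m \<le> cdf ?N q"
    unfolding q_def using le_F_quantile by simp
  have AB_disj: "A \<inter> B = {}"
    by (auto simp: A_def B_def)
  show ?thesis
  proof
    have "h \<in> borel_measurable M"
      unfolding h_def by measurable
    moreover have "0 \<le> h p \<and> h p \<le> 1" for p
      using \<theta> AB_disj by (auto simp: h_def indicator_def)
    moreover have "(\<integral>p. h p \<partial>M) = m"
      using \<theta> by (simp add: h_def integral_indicator_add_scaled)
    ultimately show "submeasure_density M m h"
      by (simp add: submeasure_density_def)
  next
    fix r :: real assume "0 \<le> r"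
    show "(\<integral>p. h p * indicator {p \<in> space M. r < R p} p \<partial>M) = max 0 (m - cdf ?N r)"
    proof (cases "r < q")
      case True
      have "(\<lambda>p. h p * indicator {p \<in> space M. r < R p} p)
          = (\<lambda>p. indicator (A - {p \<in> space M. R p \<le> r}) p + \<theta> * indicator B p)"
        using True by (auto simp: h_def A_def B_def indicator_def fun_eq_iff)
      moreover have "measure M (A - {p \<in> space M. R p \<le> r}) = measure M A - cdf ?N r"
        using True by (subst finite_measure_Diff) (auto simp: cdf_distr A_def)
      moreover have "cdf ?N r \<le> m"
        using F_le_below_quantile \<open>0 \<le> r\<close> True unfolding q_def by blast
      ultimately show ?thesis
        using \<theta> by (simp add: integral_indicator_add_scaled)
    next
      case False
      have "(\<lambda>p. h p * indicator {p \<in> space M. r < R p} p) = (\<lambda>p. 0)"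
        using False by (auto simp: h_def A_def B_def indicator_def fun_eq_iff)
      moreover have "cdf ?N q \<le> cdf ?N r"
        using False mono_F by (simp add: monoD)
      ultimately show ?thesis
        using \<open>m \<le> cdf ?N q\<close> by simp
    qed
  qed
qed


lemma (in prob_space) nn_integral_submeasure_density_square:
  assumes h: "submeasure_density M m h"
    and [measurable]: "S \<in> borel_measurable M" and S_nonneg: "\<And>p. 0 \<le> S p"
  shows "(\<integral>\<^sup>+ p. ennreal (h p * (S p)\<^sup>2) \<partial>M)
    = (\<integral>\<^sup>+ r. ennreal (indicator {0..} r * (2 * r))
              * ennreal (\<integral>p. h p * indicator {p \<in> space M. r < S p} p \<partial>M) \<partial>lborel)"
proof -
  have [measurable]: "h \<in> borel_measurable M" and h_nonneg: "\<And>p. 0 \<le> h p"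
    using h by (auto simp: submeasure_density_def)
  have "(\<integral>\<^sup>+ p. ennreal (h p * (S p)\<^sup>2) \<partial>M) = (\<integral>\<^sup>+ p. ennreal (h p) * ennreal ((S p)\<^sup>2) \<partial>M)"
    using h_nonneg by (simp add: ennreal_mult)
  also have "\<dots> = (\<integral>\<^sup>+ r. ennreal (indicator {0..} r * (2 * r))
              * (\<integral>\<^sup>+ p. ennreal (h p) * indicator {p. r < S p} p \<partial>M) \<partial>lborel)"
    using S_nonneg by (intro nn_integral_mult_square_layer_cake) auto
  also have "\<dots> = (\<integral>\<^sup>+ r. ennreal (indicator {0..} r * (2 * r))
              * ennreal (\<integral>p. h p * indicator {p \<in> space M. r < S p} p \<partial>M) \<partial>lborel)"
  proof (intro nn_integral_cong arg_cong2[where f = times] refl)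
    fix r :: real
    have "(\<integral>\<^sup>+ p. ennreal (h p) * indicator {p. r < S p} p \<partial>M)
        = (\<integral>\<^sup>+ p. ennreal (h p) * indicator {p \<in> space M. r < S p} p \<partial>M)"
      by (intro nn_integral_cong) (simp add: indicator_def)
    also have "\<dots> = ennreal (\<integral>p. h p * indicator {p \<in> space M. r < S p} p \<partial>M)"
      by (rule integral_submeasure_density_mult_indicator(2)[OF h]) measurable
    finally show "(\<integral>\<^sup>+ p. ennreal (h p) * indicator {p. r < S p} p \<partial>M)
        = ennreal (\<integral>p. h p * indicator {p \<in> space M. r < S p} p \<partial>M)" .
  qed
  finally show ?thesis .
qed

lemma (in prob_space) quantile_energy_le_nn_integral:
  assumes h: "submeasure_density M m h"
    and [measurable]: "S \<in> borel_measurable M" and S_nonneg: "\<And>p. 0 \<le> S p"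
    and "0 < m" "m < 1"
  shows "ennreal (quantile_energy (cdf (distr M borel S)) m) \<le> (\<integral>\<^sup>+ p. ennreal (h p * (S p)\<^sup>2) \<partial>M)"
proof -
  interpret N: real_distribution "distr M borel S"
    by simp
  interpret quantile_profile "cdf (distr M borel S)" m
    using N.quantile_profile_cdf \<open>0 < m\<close> \<open>m < 1\<close> .
  show ?thesis
    unfolding quantile_energy_layer_cake(2) nn_integral_submeasure_density_square[OF h \<open>S \<in> borel_measurable M\<close> S_nonneg]
    by (intro nn_integral_mono mult_left_mono ennreal_leI
        integral_submeasure_density_above_ge[OF h]) auto
qed

lemma (in prob_space) exists_minimizing_submeasure_density:
  assumes [measurable]: "R \<in> borel_measurable M" and R_nonneg: "\<And>p. 0 \<le> R p"
    and "0 < m" "m < 1"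
  obtains h where "submeasure_density M m h"
    and "ennreal (quantile_energy (cdf (distr M borel R)) m) = (\<integral>\<^sup>+ p. ennreal (h p * (R p)\<^sup>2) \<partial>M)"
proof -
  interpret N: real_distribution "distr M borel R"
    by simp
  interpret quantile_profile "cdf (distr M borel R)" m
    using N.quantile_profile_cdf \<open>0 < m\<close> \<open>m < 1\<close> .
  obtain h where h: "submeasure_density M m h"
    and above: "\<And>r. 0 \<le> r \<Longrightarrow> (\<integral>p. h p * indicator {p \<in> space M. r < R p} p \<partial>M)
                                 = max 0 (m - cdf (distr M borel R) r)"
    using exists_optimal_submeasure_density assms by blast
  have "ennreal (quantile_energy (cdf (distr M borel R)) m) = (\<integral>\<^sup>+ p. ennreal (h p * (R p)\<^sup>2) \<partial>M)"
    unfolding quantile_energy_layer_cake(2) nn_integral_submeasure_density_square[OF h \<open>R \<in> borel_measurable M\<close> R_nonneg]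
  proof (intro nn_integral_cong)
    fix r :: real
    show "ennreal (indicator {0..} r * (2 * r)) * ennreal (m - cdf (distr M borel R) r)
        = ennreal (indicator {0..} r * (2 * r))
          * ennreal (\<integral>p. h p * indicator {p \<in> space M. r < R p} p \<partial>M)"
      by (cases "0 \<le> r") (simp_all add: above)
  qed
  with h that show ?thesis
    by blast
qed

section \<open>The Cauchy-Schwarz and Minkowski inequalities\<close>

lemma Cauchy_Schwarz_integral:
  fixes X Y :: "'a \<Rightarrow> real"
  assumes [measurable]: "X \<in> borel_measurable M" "Y \<in> borel_measurable M"
    and X2: "integrable M (\<lambda>p. (X p)\<^sup>2)" and Y2: "integrable M (\<lambda>p. (Y p)\<^sup>2)"
  shows "integrable M (\<lambda>p. X p * Y p)"
    and "(\<integral>p. X p * Y p \<partial>M) \<le> sqrt (\<integral>p. (X p)\<^sup>2 \<partial>M) * sqrt (\<integral>p. (Y p)\<^sup>2 \<partial>M)"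
proof -
  have "\<bar>X p * Y p\<bar> \<le> (X p)\<^sup>2 + (Y p)\<^sup>2" for p
  proof -
    have "2 * \<bar>X p * Y p\<bar> \<le> (X p)\<^sup>2 + (Y p)\<^sup>2"
      using sum_squares_bound[of "\<bar>X p\<bar>" "\<bar>Y p\<bar>"] by (simp add: abs_mult mult.assoc)
    then show ?thesis
      using abs_ge_zero[of "X p * Y p"] by linarith
  qed
  then show XY: "integrable M (\<lambda>p. X p * Y p)"
    by (intro Bochner_Integration.integrable_bound[OF Bochner_Integration.integrable_add[OF X2 Y2]]) auto
  let ?c = "\<integral>p. \<bar>X p\<bar> * \<bar>Y p\<bar> \<partial>M"
  have nn_sq: "(\<integral>\<^sup>+ p. ennreal ((Z p)\<^sup>2) \<partial>M) = ennreal (\<integral>p. (Z p)\<^sup>2 \<partial>M)"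
    if "integrable M (\<lambda>p. (Z p)\<^sup>2)" for Z
    using that by (simp add: nn_integral_eq_integral)
  have abs_XY: "integrable M (\<lambda>p. \<bar>X p\<bar> * \<bar>Y p\<bar>)"
    using integrable_abs[OF XY] by (simp add: abs_mult)
  have c_eq: "(\<integral>\<^sup>+ p. ennreal \<bar>X p\<bar> * ennreal \<bar>Y p\<bar> \<partial>M) = ennreal ?c"
    using abs_XY by (simp add: nn_integral_eq_integral ennreal_mult[symmetric])
  have "0 \<le> ?c"
    by (intro integral_nonneg_AE) auto
  then have "ennreal (?c\<^sup>2) \<le> ennreal (\<integral>p. (X p)\<^sup>2 \<partial>M) * ennreal (\<integral>p. (Y p)\<^sup>2 \<partial>M)"
    using Cauchy_Schwarz_nn_integral[of "\<lambda>p. ennreal \<bar>X p\<bar>" M "\<lambda>p. ennreal \<bar>Y p\<bar>"]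
    by (simp add: c_eq ennreal_power nn_sq X2 Y2)
  then have "?c\<^sup>2 \<le> (\<integral>p. (X p)\<^sup>2 \<partial>M) * (\<integral>p. (Y p)\<^sup>2 \<partial>M)"
    by (simp add: ennreal_mult[symmetric])
  then have "?c \<le> sqrt (\<integral>p. (X p)\<^sup>2 \<partial>M) * sqrt (\<integral>p. (Y p)\<^sup>2 \<partial>M)"
    by (metis real_le_rsqrt real_sqrt_mult)
  moreover have "(\<integral>p. X p * Y p \<partial>M) \<le> ?c"
    using XY abs_XY by (intro integral_mono) (auto simp: abs_mult[symmetric])
  ultimately show "(\<integral>p. X p * Y p \<partial>M) \<le> sqrt (\<integral>p. (X p)\<^sup>2 \<partial>M) * sqrt (\<integral>p. (Y p)\<^sup>2 \<partial>M)"
    by linarith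
qed

lemma Minkowski_integral_sq:
  fixes X Y :: "'a \<Rightarrow> real"
  assumes [measurable]: "X \<in> borel_measurable M" "Y \<in> borel_measurable M"
    and X2: "integrable M (\<lambda>p. (X p)\<^sup>2)" and Y2: "integrable M (\<lambda>p. (Y p)\<^sup>2)"
  shows "integrable M (\<lambda>p. (X p + Y p)\<^sup>2)"
    and "sqrt (\<integral>p. (X p + Y p)\<^sup>2 \<partial>M) \<le> sqrt (\<integral>p. (X p)\<^sup>2 \<partial>M) + sqrt (\<integral>p. (Y p)\<^sup>2 \<partial>M)"
proof -
  let ?A = "\<integral>p. (X p)\<^sup>2 \<partial>M" and ?B = "\<integral>p. (Y p)\<^sup>2 \<partial>M"
  have expand: "(\<lambda>p. (X p + Y p)\<^sup>2) = (\<lambda>p. (X p)\<^sup>2 + 2 * (X p * Y p) + (Y p)\<^sup>2)"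
    by (simp add: fun_eq_iff power2_eq_square algebra_simps)
  note XY = Cauchy_Schwarz_integral[OF assms]
  show "integrable M (\<lambda>p. (X p + Y p)\<^sup>2)"
    unfolding expand using XY(1) X2 Y2 by auto
  have "(\<integral>p. (X p + Y p)\<^sup>2 \<partial>M) = ?A + 2 * (\<integral>p. X p * Y p \<partial>M) + ?B"
    unfolding expand using XY(1) X2 Y2 by simp
  also have "\<dots> \<le> ?A + 2 * (sqrt ?A * sqrt ?B) + ?B"
    using XY(2) by simp
  also have "\<dots> = (sqrt ?A + sqrt ?B)\<^sup>2"
    by (simp add: power2_sum)
  finally show "sqrt (\<integral>p. (X p + Y p)\<^sup>2 \<partial>M) \<le> sqrt ?A + sqrt ?B"
    by (simp add: real_le_lsqrt)
qed

text \<open>Every admissible \<open>h\<close> bounds the energy of \<open>S\<close> by \<open>\<parallel>S\<parallel>\<^sup>2\<close> in \<open>L\<^sup>2(h M)\<close>, and the one minimizing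
  for \<open>R\<close> attains it; so Minkowski's inequality in \<open>L\<^sup>2(h M)\<close> compares the two energies.\<close>
lemma (in prob_space) sqrt_quantile_energy_le:
  assumes h: "submeasure_density M m h"
    and R_opt: "ennreal (quantile_energy (cdf (distr M borel R)) m) = (\<integral>\<^sup>+ p. ennreal (h p * (R p)\<^sup>2) \<partial>M)"
    and [measurable]: "R \<in> borel_measurable M" "D \<in> borel_measurable M"
    and S_meas[measurable]: "S \<in> borel_measurable M"
    and S_nonneg: "\<And>p. 0 \<le> S p" and S_le: "\<And>p. S p \<le> R p + D p"
    and D2: "integrable M (\<lambda>p. (D p)\<^sup>2)"
    and "0 < m" "m < 1"
  shows "sqrt (quantile_energy (cdf (distr M borel S)) m)
    \<le> sqrt (quantile_energy (cdf (distr M borel R)) m) + sqrt (\<integral>p. h p * (D p)\<^sup>2 \<partial>M)"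
proof -
  let ?E = "\<lambda>T. quantile_energy (cdf (distr M borel T)) m"
  have [measurable]: "h \<in> borel_measurable M" and h01: "\<And>p. 0 \<le> h p \<and> h p \<le> 1"
    using h by (auto simp: submeasure_density_def)
  define X where "X p = sqrt (h p) * R p" for p
  define Y where "Y p = sqrt (h p) * D p" for p
  have X_meas[measurable]: "X \<in> borel_measurable M" and Y_meas[measurable]: "Y \<in> borel_measurable M"
    unfolding X_def Y_def by measurable
  have X2_eq: "(X p)\<^sup>2 = h p * (R p)\<^sup>2" and Y2_eq: "(Y p)\<^sup>2 = h p * (D p)\<^sup>2" for p
    using h01 by (simp_all add: X_def Y_def power_mult_distrib)
  have X2_nn: "(\<integral>\<^sup>+ p. ennreal ((X p)\<^sup>2) \<partial>M) = ennreal (?E R)"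
    using R_opt by (simp add: X2_eq)
  then have X2: "integrable M (\<lambda>p. (X p)\<^sup>2)"
    by (intro integrableI_nn_integral_finite) auto
  have "(\<integral>p. (X p)\<^sup>2 \<partial>M) = ?E R"
    using integral_eq_nn_integral[of "\<lambda>p. (X p)\<^sup>2" M] X2_nn quantile_energy_nonneg by simp
  have Y2: "integrable M (\<lambda>p. (Y p)\<^sup>2)"
    unfolding Y2_eq using integrable_submeasure_density_mult[OF h _ D2] by simp
  note Minkowski = Minkowski_integral_sq[OF X_meas Y_meas X2 Y2]
  have "h p * (S p)\<^sup>2 \<le> (X p + Y p)\<^sup>2" for p
  proof -
    have "(S p)\<^sup>2 \<le> (R p + D p)\<^sup>2"
      using S_nonneg S_le by (intro power_mono) auto
    then have "h p * (S p)\<^sup>2 \<le> h p * (R p + D p)\<^sup>2"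
      using h01 by (intro mult_left_mono) auto
    also have "\<dots> = (sqrt (h p) * (R p + D p))\<^sup>2"
      using h01[of p] by (simp add: power_mult_distrib)
    also have "\<dots> = (X p + Y p)\<^sup>2"
      by (simp add: X_def Y_def distrib_left)
    finally show ?thesis .
  qed
  then have "ennreal (?E S) \<le> ennreal (\<integral>p. (X p + Y p)\<^sup>2 \<partial>M)"
    using quantile_energy_le_nn_integral[OF h S_meas S_nonneg \<open>0 < m\<close> \<open>m < 1\<close>] Minkowski(1)
    by (auto simp: nn_integral_eq_integral[symmetric] intro!: nn_integral_mono elim!: order_trans)
  moreover have "0 \<le> (\<integral>p. (X p + Y p)\<^sup>2 \<partial>M)"
    by (intro integral_nonneg_AE) auto
  ultimately have "sqrt (?E S) \<le> sqrt (\<integral>p. (X p + Y p)\<^sup>2 \<partial>M)"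
    by simp
  also have "\<dots> \<le> sqrt (\<integral>p. (X p)\<^sup>2 \<partial>M) + sqrt (\<integral>p. (Y p)\<^sup>2 \<partial>M)"
    by (rule Minkowski(2))
  finally show ?thesis
    by (simp add: \<open>(\<integral>p. (X p)\<^sup>2 \<partial>M) = ?E R\<close> Y2_eq)
qed

section \<open>Lipschitz continuity and Wasserstein stability of the DTM\<close>

lemma is_prob_on_distr:
  assumes "prob_space \<pi>" and "f \<in> borel_measurable \<pi>"
  shows "is_prob_on (distr \<pi> borel f)"
  using assms by (simp add: is_prob_on_def prob_space.prob_space_distr)

lemma is_prob_on_borel_measurable_eq:
  assumes "is_prob_on \<alpha>"
  shows "borel_measurable \<alpha> = borel_measurable borel"
  using assms by (intro measurable_cong_sets) (simp_all add: is_prob_on_def)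

lemma is_prob_on_space_eq:
  assumes "is_prob_on \<alpha>"
  shows "space \<alpha> = UNIV"
  using assms sets_eq_imp_space_eq[of \<alpha> borel] by (simp add: is_prob_on_def)

lemma measure_cball_eq_cdf_distr_dist:
  assumes "is_prob_on \<alpha>"
  shows "(\<lambda>r. measure \<alpha> (cball x r)) = cdf (distr \<alpha> borel (dist x))"
proof -
  interpret prob_space \<alpha>
    using assms by (simp add: is_prob_on_def)
  have "dist x \<in> borel_measurable \<alpha>"
    by (simp add: is_prob_on_borel_measurable_eq[OF assms])
  then show ?thesis
    by (simp add: cdf_distr fun_eq_iff cball_def is_prob_on_space_eq[OF assms])
qed

lemma dtm_eq_sqrt_quantile_energy_cdf:
  assumes "is_prob_on \<alpha>"
  shows "dtm \<alpha> m x = sqrt (quantile_energy (cdf (distr \<alpha> borel (dist x))) m / m)"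
  unfolding dtm_eq_quantile_energy measure_cball_eq_cdf_distr_dist[OF assms] ..

lemma quantile_profile_measure_cball:
  assumes "is_prob_on \<alpha>" "0 < m" "m < 1"
  shows "quantile_profile (\<lambda>r. measure \<alpha> (cball x r)) m"
proof -
  interpret prob_space \<alpha>
    using assms by (simp add: is_prob_on_def)
  have "dist x \<in> borel_measurable \<alpha>"
    by (simp add: is_prob_on_borel_measurable_eq[OF assms(1)])
  then interpret N: real_distribution "distr \<alpha> borel (dist x)"
    by simp
  show ?thesis
    unfolding measure_cball_eq_cdf_distr_dist[OF assms(1)] using assms(2,3) by (rule N.quantile_profile_cdf)
qed

lemma sqrt_div_le_add:
  assumes "sqrt a \<le> sqrt b + c" "0 < (m::real)"
  shows "sqrt (a / m) \<le> sqrt (b / m) + c / sqrt m"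
  using divide_right_mono[OF assms(1), of "sqrt m"] assms(2)
  by (simp add: real_sqrt_divide add_divide_distrib)

lemma dtm_le_dtm_add_dist:
  assumes "is_prob_on \<alpha>" "0 < m" "m < 1"
  shows "dtm \<alpha> m y \<le> dtm \<alpha> m x + dist x y"
proof -
  interpret prob_space \<alpha>
    using assms by (simp add: is_prob_on_def)
  have [measurable]: "dist z \<in> borel_measurable \<alpha>" for z
    by (simp add: is_prob_on_borel_measurable_eq[OF assms(1)])
  let ?E = "\<lambda>z. quantile_energy (cdf (distr \<alpha> borel (dist z))) m"
  obtain h where h: "submeasure_density \<alpha> m h"
    and opt: "ennreal (?E x) = (\<integral>\<^sup>+ p. ennreal (h p * (dist x p)\<^sup>2) \<partial>\<alpha>)"
    using exists_minimizing_submeasure_density[of "dist x"] assms(2,3) by auto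
  have "dist y p \<le> dist x p + dist x y" for p
    using dist_triangle[of y p x] by (simp add: dist_commute)
  then have "sqrt (?E y) \<le> sqrt (?E x) + sqrt (\<integral>p. h p * (dist x y)\<^sup>2 \<partial>\<alpha>)"
    using sqrt_quantile_energy_le[OF h opt, of "\<lambda>_. dist x y" "dist y"] assms(2,3) by simp
  also have "(\<integral>p. h p * (dist x y)\<^sup>2 \<partial>\<alpha>) = m * (dist x y)\<^sup>2"
    using h by (simp add: submeasure_density_def)
  also have "sqrt (m * (dist x y)\<^sup>2) = sqrt m * dist x y"
    by (simp add: real_sqrt_mult)
  finally have "sqrt (?E y / m) \<le> sqrt (?E x / m) + sqrt m * dist x y / sqrt m"
    using \<open>0 < m\<close> by (rule sqrt_div_le_add)
  then show ?thesis
    using \<open>0 < m\<close> by (simp add: dtm_eq_sqrt_quantile_energy_cdf[OF \<open>is_prob_on \<alpha>\<close>])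
qed

lemma dtm_le_dtm_add_transport_cost:
  fixes f g :: "'b \<Rightarrow> 'a::euclidean_space"
  assumes "prob_space \<pi>" and [measurable]: "f \<in> borel_measurable \<pi>" "g \<in> borel_measurable \<pi>"
    and cost: "integrable \<pi> (\<lambda>p. (dist (f p) (g p))\<^sup>2)" and "0 < m" "m < 1"
  shows "dtm (distr \<pi> borel g) m x
    \<le> dtm (distr \<pi> borel f) m x + sqrt ((\<integral>p. (dist (f p) (g p))\<^sup>2 \<partial>\<pi>) / m)"
proof -
  interpret prob_space \<pi>
    by fact
  have law: "distr (distr \<pi> borel k) borel (dist x) = distr \<pi> borel (\<lambda>p. dist x (k p))"
    if "k \<in> borel_measurable \<pi>" for k
    using that by (subst distr_distr) (simp_all add: comp_def)
  let ?E = "\<lambda>k. quantile_energy (cdf (distr \<pi> borel (\<lambda>p. dist x (k p)))) m"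
  obtain h where h: "submeasure_density \<pi> m h"
    and opt: "ennreal (?E f) = (\<integral>\<^sup>+ p. ennreal (h p * (dist x (f p))\<^sup>2) \<partial>\<pi>)"
    using exists_minimizing_submeasure_density[of "\<lambda>p. dist x (f p)"] assms(5,6) by auto
  have "dist x (g p) \<le> dist x (f p) + dist (f p) (g p)" for p
    by (rule dist_triangle)
  then have "sqrt (?E g) \<le> sqrt (?E f) + sqrt (\<integral>p. h p * (dist (f p) (g p))\<^sup>2 \<partial>\<pi>)"
    using sqrt_quantile_energy_le[OF h opt, of "\<lambda>p. dist (f p) (g p)" "\<lambda>p. dist x (g p)"] cost assms(5,6)
    by simp
  moreover have "(\<integral>p. h p * (dist (f p) (g p))\<^sup>2 \<partial>\<pi>) \<le> (\<integral>p. (dist (f p) (g p))\<^sup>2 \<partial>\<pi>)"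
    using h cost integrable_submeasure_density_mult[OF h _ cost]
    by (intro integral_mono) (auto simp: submeasure_density_def mult_left_le_one_le)
  then have "sqrt (\<integral>p. h p * (dist (f p) (g p))\<^sup>2 \<partial>\<pi>) \<le> sqrt (\<integral>p. (dist (f p) (g p))\<^sup>2 \<partial>\<pi>)"
    by (rule real_sqrt_le_mono)
  ultimately have "sqrt (?E g) \<le> sqrt (?E f) + sqrt (\<integral>p. (dist (f p) (g p))\<^sup>2 \<partial>\<pi>)"
    by linarith
  then have "sqrt (?E g / m) \<le> sqrt (?E f / m) + sqrt (\<integral>p. (dist (f p) (g p))\<^sup>2 \<partial>\<pi>) / sqrt m"
    using \<open>0 < m\<close> by (rule sqrt_div_le_add)
  moreover have "dtm (distr \<pi> borel k) m x = sqrt (?E k / m)" if "k \<in> borel_measurable \<pi>" for k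
    using dtm_eq_sqrt_quantile_energy_cdf[OF is_prob_on_distr[OF \<open>prob_space \<pi>\<close> that]] law[OF that]
    by simp
  ultimately show ?thesis
    by (simp add: real_sqrt_divide)
qed

lemma borel_measurable_fst_euclidean [measurable]:
  "(fst :: 'a::euclidean_space \<times> 'a \<Rightarrow> 'a) \<in> borel_measurable borel"
  by (intro borel_measurable_continuous_onI continuous_intros)

lemma borel_measurable_snd_euclidean [measurable]:
  "(snd :: 'a::euclidean_space \<times> 'a \<Rightarrow> 'a) \<in> borel_measurable borel"
  by (intro borel_measurable_continuous_onI continuous_intros)

lemma dtm_diff_sq_le_transport_cost:
  fixes \<mu> \<nu> :: "'a::euclidean_space measure"
  assumes "\<pi> \<in> couplings \<mu> \<nu>" "0 < m" "m < 1"
  shows "ennreal (m * \<bar>dtm \<mu> m x - dtm \<nu> m x\<bar>\<^sup>2) \<le> (\<integral>\<^sup>+ p. ennreal ((dist (fst p) (snd p))\<^sup>2) \<partial>\<pi>)"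
proof (cases "(\<integral>\<^sup>+ p. ennreal ((dist (fst p) (snd p))\<^sup>2) \<partial>\<pi>) = \<infinity>")
  case False
  let ?\<Delta> = "\<bar>dtm \<mu> m x - dtm \<nu> m x\<bar>" and ?cost = "\<lambda>p. (dist (fst p) (snd p))\<^sup>2"
  have "prob_space \<pi>" and sets: "sets \<pi> = sets borel"
    and \<mu>: "distr \<pi> borel fst = \<mu>" and \<nu>: "distr \<pi> borel snd = \<nu>"
    using assms(1) by (auto simp: couplings_def)
  have [measurable]: "fst \<in> borel_measurable \<pi>" "snd \<in> borel_measurable \<pi>"
    by (simp_all add: measurable_cong_sets[OF sets refl])
  have "integrable \<pi> ?cost"
    using False
    by (intro integrableI_nn_integral_finite[where x = "enn2real (\<integral>\<^sup>+ p. ennreal (?cost p) \<partial>\<pi>)"])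
      (auto simp: less_top)
  then have "integrable \<pi> (\<lambda>p. (dist (snd p) (fst p))\<^sup>2)"
    by (simp add: dist_commute)
  note transport = dtm_le_dtm_add_transport_cost[OF \<open>prob_space \<pi>\<close>]
  have "dtm \<nu> m x \<le> dtm \<mu> m x + sqrt ((\<integral>p. ?cost p \<partial>\<pi>) / m)"
    using transport[of fst snd] \<open>integrable \<pi> ?cost\<close> assms(2,3) \<mu> \<nu> by simp
  moreover have "dtm \<mu> m x \<le> dtm \<nu> m x + sqrt ((\<integral>p. ?cost p \<partial>\<pi>) / m)"
    using transport[of snd fst] \<open>integrable \<pi> (\<lambda>p. (dist (snd p) (fst p))\<^sup>2)\<close> assms(2,3) \<mu> \<nu>
    by (simp add: dist_commute)
  ultimately have "?\<Delta> \<le> sqrt ((\<integral>p. ?cost p \<partial>\<pi>) / m)"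
    by linarith
  moreover have "0 \<le> (\<integral>p. ?cost p \<partial>\<pi>) / m"
    using assms(2) by (simp add: integral_nonneg_AE)
  ultimately have "?\<Delta>\<^sup>2 \<le> (\<integral>p. ?cost p \<partial>\<pi>) / m"
    by (metis abs_ge_zero power_mono real_sqrt_pow2)
  then have "m * ?\<Delta>\<^sup>2 \<le> (\<integral>p. ?cost p \<partial>\<pi>)"
    using assms(2) by (simp add: field_simps)
  then show ?thesis
    using \<open>integrable \<pi> ?cost\<close> by (simp add: nn_integral_eq_integral)
qed simp

lemma W2_nonneg: "0 \<le> W2 \<mu> \<nu>"
  by (simp add: W2_def)

lemma abs_dtm_diff_le_W2:
  fixes \<mu> \<nu> :: "'a::euclidean_space measure"
  assumes "W2_sq \<mu> \<nu> \<noteq> \<infinity>" "0 < m" "m < 1"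
  shows "\<bar>dtm \<mu> m x - dtm \<nu> m x\<bar> \<le> W2 \<mu> \<nu> / sqrt m"
proof -
  have "ennreal (m * \<bar>dtm \<mu> m x - dtm \<nu> m x\<bar>\<^sup>2) \<le> W2_sq \<mu> \<nu>"
    unfolding W2_sq_def using dtm_diff_sq_le_transport_cost assms(2,3) by (intro INF_greatest)
  also have "W2_sq \<mu> \<nu> = ennreal ((W2 \<mu> \<nu>)\<^sup>2)"
    using assms(1) by (simp add: W2_def less_top)
  finally have "\<bar>dtm \<mu> m x - dtm \<nu> m x\<bar>\<^sup>2 \<le> (W2 \<mu> \<nu> / sqrt m)\<^sup>2"
    using assms(2) by (simp add: field_simps)
  moreover have "0 \<le> W2 \<mu> \<nu> / sqrt m"
    using assms(2) W2_nonneg[of \<mu> \<nu>] by simp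
  ultimately show ?thesis
    using power2_le_imp_le by blast
qed

section \<open>Supports and the interleaving of DTM-filtrations\<close>

lemma closed_supp:
  assumes "finite_measure M" and sets: "sets M = sets (borel :: 'a::euclidean_space measure)"
  shows "closed (supp M)"
proof -
  have "\<exists>e>0. ball x e \<subseteq> - supp M" if "x \<notin> supp M" for x
  proof -
    obtain r where "0 < r" and null: "measure M (ball x r) \<le> 0"
      using \<open>x \<notin> supp M\<close> by (auto simp: supp_def not_less)
    have "z \<notin> supp M" if "z \<in> ball x r" for z
    proof -
      have "measure M (ball z (r - dist x z)) \<le> measure M (ball x r)"
        by (intro finite_measure.finite_measure_mono[OF \<open>finite_measure M\<close>])
          (auto simp: sets ball_subset_ball_iff dist_commute)
      then have "\<not> 0 < measure M (ball z (r - dist x z))"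
        using null by linarith
      moreover have "0 < r - dist x z"
        using that by simp
      ultimately show ?thesis
        unfolding supp_def by blast
    qed
    with \<open>0 < r\<close> show ?thesis
      by blast
  qed
  then show ?thesis
    unfolding closed_def open_contains_ball by blast
qed

lemma measure_eq_0_if_disjoint_supp:
  assumes "finite_measure M" and sets: "sets M = sets (borel :: 'a::euclidean_space measure)"
    and "compact K" "K \<inter> supp M = {}"
  shows "measure M K = 0"
proof -
  interpret finite_measure M
    by fact
  have "\<exists>r>0. measure M (ball z r) = 0" if "z \<in> K" for z
  proof -
    have "z \<notin> supp M"
      using assms(4) that by blast
    then obtain r where "0 < r" "measure M (ball z r) \<le> 0"
      by (auto simp: supp_def not_less)
    then show ?thesis
      using measure_nonneg[of M "ball z r"] by (intro exI[of _ r]) simp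
  qed
  then obtain r where r: "\<And>z. z \<in> K \<Longrightarrow> 0 < r z \<and> measure M (ball z (r z)) = 0"
    by metis
  then obtain C where C: "C \<subseteq> K" "finite C" "K \<subseteq> (\<Union>z\<in>C. ball z (r z))"
    using compactE_image[OF \<open>compact K\<close>, of K "\<lambda>z. ball z (r z)"] by force
  have "measure M K \<le> measure M (\<Union>z\<in>C. ball z (r z))"
    using C by (intro finite_measure_mono) (auto simp: sets)
  also have "\<dots> \<le> (\<Sum>z\<in>C. measure M (ball z (r z)))"
    using C by (intro finite_measure_subadditive_finite) (auto simp: sets)
  also have "\<dots> = 0"
    using C r by (intro sum.neutral) auto
  finally show ?thesis
    using measure_nonneg[of M K] by linarith
qed

lemma exists_supp_near_dtm:
  assumes "is_prob_on \<alpha>" "0 < m" "m < 1"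
  shows "\<exists>x'\<in>supp \<alpha>. dist x x' \<le> dtm \<alpha> m x"
proof -
  let ?F = "\<lambda>r. measure \<alpha> (cball x r)"
  interpret quantile_profile ?F m
    using quantile_profile_measure_cball assms .
  have fin: "finite_measure \<alpha>" "sets \<alpha> = sets borel"
    using assms(1) by (auto simp: is_prob_on_def prob_space.finite_measure)
  have meets_supp: "cball x r \<inter> supp \<alpha> \<noteq> {}" if "0 < ?F r" for r
    using measure_eq_0_if_disjoint_supp[OF fin compact_cball] that by force
  obtain r where "m < ?F r"
    using F_exceeds_m by blast
  then have "0 < ?F r"
    using m_pos by linarith
  then have "supp \<alpha> \<noteq> {}"
    using meets_supp by blast
  then obtain x' where "x' \<in> supp \<alpha>" and closest: "\<And>z. z \<in> supp \<alpha> \<Longrightarrow> dist x x' \<le> dist x z"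
    using distance_attains_inf[OF closed_supp[OF fin]] by blast
  have "dist x x' \<le> quantile ?F t" if "0 \<le> t" "t \<le> m" for t
  proof (rule le_quantile[OF \<open>t \<le> m\<close>])
    fix r assume "t < ?F r"
    then obtain z where "z \<in> supp \<alpha>" "dist x z \<le> r"
      using meets_supp[of r] \<open>0 \<le> t\<close> by auto
    then show "dist x x' \<le> r"
      using closest by fastforce
  qed
  then have "m * (dist x x')\<^sup>2 \<le> quantile_energy ?F m"
    by (intro quantile_energy_ge) auto
  then have "dist x x' \<le> dtm \<alpha> m x"
    using m_pos by (simp add: dtm_eq_quantile_energy real_le_rsqrt field_simps)
  with \<open>x' \<in> supp \<alpha>\<close> show ?thesis
    by blast
qed

lemma dtm_le_of_ball_growth:
  assumes "is_prob_on \<mu>" "0 < m" "m < 1" "0 < a" "1 \<le> d"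
    and growth: "\<And>r. 0 < r \<Longrightarrow> r < (m / a) powr (1 / real d) \<Longrightarrow> a * r ^ d \<le> measure \<mu> (ball x r)"
  shows "dtm \<mu> m x \<le> (m / a) powr (1 / real d)"
proof -
  let ?F = "\<lambda>r. measure \<mu> (cball x r)" and ?c = "(m / a) powr (1 / real d)"
  interpret quantile_profile ?F m
    using quantile_profile_measure_cball assms(1-3) .
  interpret prob_space \<mu>
    using assms(1) by (simp add: is_prob_on_def)
  have "quantile ?F t \<le> ?c" if "0 \<le> t" "t < m" for t
  proof -
    text \<open>The radius at which the growth bound guarantees mass \<open>(t + m) / 2 > t\<close>.\<close>
    define r where "r = ((t + m) / (2 * a)) powr (1 / real d)"
    have "0 < (t + m) / (2 * a)" "(t + m) / (2 * a) < m / a"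
      using that \<open>0 < a\<close> by (simp_all add: field_simps)
    then have "0 < r" "r < ?c"
      unfolding r_def using \<open>1 \<le> d\<close> by (auto intro!: powr_less_mono2)
    have ar: "a * r ^ d = (t + m) / 2"
      using \<open>0 < r\<close> \<open>0 < (t + m) / (2 * a)\<close> \<open>0 < a\<close> \<open>1 \<le> d\<close> that \<open>0 < m\<close>
      by (simp add: r_def powr_realpow[symmetric] powr_powr)
    have "t < (t + m) / 2"
      using \<open>t < m\<close> by simp
    also have "\<dots> \<le> measure \<mu> (ball x r)"
      using growth[OF \<open>0 < r\<close> \<open>r < ?c\<close>] unfolding ar .
    also have "\<dots> \<le> ?F r"
      using assms(1) by (intro finite_measure_mono) (auto simp: is_prob_on_def)
    finally have "t < ?F r" .
    then have "quantile ?F t \<le> r"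
      using \<open>0 < r\<close> by (intro quantile_le) auto
    then show ?thesis
      using \<open>r < ?c\<close> by linarith
  qed
  then have "quantile_energy ?F m \<le> m * ?c\<^sup>2"
    by (rule quantile_energy_le)
  then show ?thesis
    using m_pos by (simp add: dtm_eq_quantile_energy real_le_lsqrt field_simps)
qed

lemma dtm_filtration_subset_shift:
  assumes "\<And>x. x \<in> supp \<alpha> \<Longrightarrow> \<exists>x'\<in>supp \<beta>. dist x x' + dtm \<beta> m x' \<le> dtm \<alpha> m x + \<epsilon>"
  shows "dtm_filtration \<alpha> m t \<subseteq> dtm_filtration \<beta> m (t + \<epsilon>)"
proof
  fix y assume "y \<in> dtm_filtration \<alpha> m t"
  then obtain x where "x \<in> supp \<alpha>" and "dist x y \<le> t - dtm \<alpha> m x"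
    by (auto simp: dtm_filtration_def)
  moreover obtain x' where "x' \<in> supp \<beta>" and "dist x x' + dtm \<beta> m x' \<le> dtm \<alpha> m x + \<epsilon>"
    using assms \<open>x \<in> supp \<alpha>\<close> by blast
  moreover have "dist x' y \<le> dist x x' + dist x y"
    by (rule dist_triangle3)
  ultimately show "y \<in> dtm_filtration \<beta> m (t + \<epsilon>)"
    by (force simp: dtm_filtration_def)
qed

text \<open>Both shifts pass to a nearest support point of the other measure, at distance at most its
  DTM; there the DTM is controlled by the Lipschitz bound, resp. by \<open>c\<close>.\<close>
lemma interleaved_dtm_filtration:
  assumes "is_prob_on \<mu>" "is_prob_on \<nu>" "0 < m" "m < 1"
    and stable: "\<And>x. \<bar>dtm \<mu> m x - dtm \<nu> m x\<bar> \<le> s"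
    and bounded: "\<And>x. x \<in> supp \<mu> \<Longrightarrow> dtm \<mu> m x \<le> c" and "0 \<le> c"
  shows "interleaved (2 * c + 3 * s) (dtm_filtration \<mu> m) (dtm_filtration \<nu> m)"
  unfolding interleaved_def
proof (intro allI impI conjI dtm_filtration_subset_shift)
  fix x assume "x \<in> supp \<mu>"
  obtain x' where "x' \<in> supp \<nu>" and near: "dist x x' \<le> dtm \<nu> m x"
    using exists_supp_near_dtm assms(2-4) by blast
  moreover have "dtm \<nu> m x' \<le> dtm \<nu> m x + dist x x'"
    using dtm_le_dtm_add_dist assms(2-4) by blast
  ultimately show "\<exists>x'\<in>supp \<nu>. dist x x' + dtm \<nu> m x' \<le> dtm \<mu> m x + (2 * c + 3 * s)"
    using stable[of x] bounded[OF \<open>x \<in> supp \<mu>\<close>] by (intro bexI[of _ x']) auto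
next
  have "0 \<le> s"
    using order_trans[OF abs_ge_zero stable] .
  fix x assume "x \<in> supp \<nu>"
  obtain x' where "x' \<in> supp \<mu>" and "dist x x' \<le> dtm \<mu> m x"
    using exists_supp_near_dtm assms(1,3,4) by blast
  moreover have "dtm \<mu> m x \<le> dtm \<nu> m x + s"
    using stable[of x] by (simp add: abs_le_iff)
  ultimately show "\<exists>x'\<in>supp \<mu>. dist x x' + dtm \<mu> m x' \<le> dtm \<nu> m x + (2 * c + 3 * s)"
    using bounded[OF \<open>x' \<in> supp \<mu>\<close>] \<open>0 \<le> c\<close> \<open>0 \<le> s\<close> by (intro bexI[of _ x']) auto
qed

lemma interleaving_dist_dtm_filtration_le:
  assumes "is_prob_on \<mu>" "is_prob_on \<nu>" "0 < m" "m < 1" "W2_sq \<mu> \<nu> \<noteq> \<infinity>"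
    and "\<And>x. x \<in> supp \<mu> \<Longrightarrow> dtm \<mu> m x \<le> c" "0 \<le> c"
  shows "interleaving_dist (dtm_filtration \<mu> m) (dtm_filtration \<nu> m)
    \<le> ereal (2 * c + 3 * (W2 \<mu> \<nu> / sqrt m))"
proof -
  have "interleaved (2 * c + 3 * (W2 \<mu> \<nu> / sqrt m)) (dtm_filtration \<mu> m) (dtm_filtration \<nu> m)"
    using interleaved_dtm_filtration[OF assms(1-4) abs_dtm_diff_le_W2[OF assms(5,3,4)] assms(6,7)] .
  moreover have "0 \<le> W2 \<mu> \<nu> / sqrt m"
    using assms(3) W2_nonneg[of \<mu> \<nu>] by simp
  ultimately show ?thesis
    unfolding interleaving_dist_def using assms(7) by (intro Inf_lower) auto
qed

lemma div_sqrt_le_sqrt_div: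
  assumes "0 \<le> w" "w \<le> 1" "0 < m"
  shows "w / sqrt m \<le> sqrt (w / m)"
proof -
  have "w\<^sup>2 \<le> w"
    using assms by (simp add: power2_eq_square mult_left_le_one_le)
  then show ?thesis
    using assms by (simp add: real_sqrt_divide real_le_rsqrt divide_right_mono)
qed

theorem corollary1p6:
  fixes \<mu> \<nu> :: "'a::euclidean_space measure"
    and d :: nat and m a :: real
  assumes "d \<ge> 1" and "0 < m" and "m < 1" and "a > 0"
    and "is_prob_on \<mu>" and "is_prob_on \<nu>"
    and "bounded (supp \<mu>)"
    and "W2_sq \<mu> \<nu> \<noteq> \<infinity>" and "W2 \<mu> \<nu> \<le> 1/4"
    and "\<forall>x\<in>supp \<mu>. \<forall>r. 0 < r \<and> r < (m / a) powr (1 / real d)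
            \<longrightarrow> measure \<mu> (ball x r) \<ge> a * r ^ d"
  shows "interleaving_dist (dtm_filtration \<mu> m) (dtm_filtration \<nu> m)
    \<le> ereal ((8 * diameter (supp \<mu>) + 5) * sqrt (W2 \<mu> \<nu> / m)
              + 2 * a powr (- 1 / real d) * m powr (1 / real d))"
proof -
  define c where "c = (m / a) powr (1 / real d)"
  have "dtm \<mu> m x \<le> c" if "x \<in> supp \<mu>" for x
    unfolding c_def using dtm_le_of_ball_growth[OF assms(5,2,3,4,1)] assms(10) that by blast
  then have interleaving: "interleaving_dist (dtm_filtration \<mu> m) (dtm_filtration \<nu> m)
      \<le> ereal (2 * c + 3 * (W2 \<mu> \<nu> / sqrt m))"
    using interleaving_dist_dtm_filtration_le[OF assms(5,6,2,3,8)] by (simp add: c_def)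
  have "W2 \<mu> \<nu> / sqrt m \<le> sqrt (W2 \<mu> \<nu> / m)"
    using assms(9) by (intro div_sqrt_le_sqrt_div[OF W2_nonneg _ assms(2)]) simp
  moreover have "0 \<le> W2 \<mu> \<nu> / sqrt m"
    using assms(2) W2_nonneg[of \<mu> \<nu>] by simp
  ultimately have "3 * (W2 \<mu> \<nu> / sqrt m) \<le> 5 * sqrt (W2 \<mu> \<nu> / m)"
    by linarith
  also have "\<dots> \<le> (8 * diameter (supp \<mu>) + 5) * sqrt (W2 \<mu> \<nu> / m)"
    using diameter_ge_0[OF assms(7)] W2_nonneg[of \<mu> \<nu>] assms(2) by (intro mult_right_mono) auto
  moreover have "c = a powr (- 1 / real d) * m powr (1 / real d)"
    unfolding c_def using assms(2,4) by (simp add: powr_divide powr_minus_divide)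
  ultimately have "ereal (2 * c + 3 * (W2 \<mu> \<nu> / sqrt m))
      \<le> ereal ((8 * diameter (supp \<mu>) + 5) * sqrt (W2 \<mu> \<nu> / m)
              + 2 * a powr (- 1 / real d) * m powr (1 / real d))"
    by simp
  with interleaving show ?thesis
    by (rule order_trans)
qed

end
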